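(* Let $q$ be a prime power, and let $\chi'$ and $\chi$ be the canonical additive characters of $\mathbb{F}_{q^2}$ and $\mathbb{F}_q$, respectively. For integers $e_1,e_2$ and $a,b\in\mathbb{F}_{q^2}$, define $$S_{(e_1,e_2)}(a,b):=\sum_{x\in\mathbb{F}_{q^2}^*}\chi'\!\left(a x^{(q+1)e_1}+b x^{e_2}\right).$$ If $a^q+a\neq 0$, $b\neq 0$ and $\gcd(q+1,e_2)=1$, then $$S_{(e_1,e_2)}(a,b)=-\sum_{z\in\mathbb{F}_q^*}\sum_{x\in\mathbb{F}_q^*}\chi\!\left(z+(a^q+a)x^{e_1}+z^{-1}b^{q+1}x^{e_2}\right).$$
   Context: For a finite field $F$ of characteristic $p$, the canonical additive character is $\chi(c)=e^{2\pi i\,\mathrm{Tr}_{F/\mathbb{F}_p}(c)/p}$. *)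

theory Defs
  imports Complex_Main "HOL-Computational_Algebra.Primes"
begin

text \<open>For a subfield of order p^n
  of a larger field, this is the trace of that subfield evaluated inside the big field.\<close>
definition abs_trace :: "nat \<Rightarrow> 'a::field \<Rightarrow> 'a" where
  "abs_trace n c = (\<Sum>i<n. c ^ (CHAR('a) ^ i))"

definition prime_field_val :: "'a::field \<Rightarrow> nat" where
  "prime_field_val y = (THE k. k < CHAR('a) \<and> of_nat k = y)"

definition can_add_char :: "nat \<Rightarrow> 'a::field \<Rightarrow> complex" where
  "can_add_char n c =
     exp (2 * of_real pi * \<i> * of_nat (prime_field_val (abs_trace n c)) / of_nat CHAR('a))"

end

theory Submission
  imports Defs "HOL-Number_Theory.Residues" "HOL-Analysis.Complex_Transcendental"
    "HOL-Computational_Algebra.Polynomial"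
begin

text \<open>Let N y = y^(q+1) and T y = y + y^q be the norm and trace from F_(q^2) to F_q, so that
  \<chi>' = \<chi> \<circ> T, and \<chi>'(a w + d) = \<chi>((a^q + a) w) \<chi>'(d) for w \<in> F_q. Since gcd(q+1, e2) = 1,
  the map x \<mapsto> (N x, b x^e2) is a bijection from the nonzero x onto the pairs (t, y) with
  t \<in> F_q^* and N y = N(b) t^e2, and x^((q+1)e1) = t^e1 lies in F_q. Hence the sum factors as the
  sum over t of \<chi>((a^q + a) t^e1) times the sum of \<chi>(T y) over the norm fibre N y = N(b) t^e2.

  Over a norm fibre N y = s the character sum is minus the Kloosterman sum of z + s/z over F_q^*:
  for u \<in> F_q, the y in the fibre with T y = u and the z with z + s/z = u are all roots of
  r^2 - u r + s, so there are at most two of them together; as the fibre has q + 1 elements and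
  F_q^* has q - 1, there are exactly two for every u, and the sum of \<chi> over F_q vanishes.\<close>

lemma card_roots_le_degree:
  fixes P :: "'a::idom poly"
  assumes "P \<noteq> 0" "degree P \<le> d"
  shows "finite {x. poly P x = 0}" "card {x. poly P x = 0} \<le> d"
  using poly_roots_finite[OF assms(1)] card_poly_roots_bound[OF assms(1)] assms(2) by auto

lemma card_power_eq_le:
  fixes c :: "'a::idom"
  assumes "n > 0"
  shows "finite {x. x ^ n = c}" "card {x. x ^ n = c} \<le> n"
proof -
  define P where "P = monom (1::'a) n - [:c:]"
  have "degree P \<le> n"
    unfolding P_def using assms by (intro degree_diff_le) (auto intro: order.trans[OF degree_monom_le])
  moreover have "coeff P n = 1"
    unfolding P_def using assms by (auto simp: coeff_monom coeff_pCons split: nat.split)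
  moreover have "{x. x ^ n = c} = {x. poly P x = 0}"
    by (auto simp: P_def poly_monom)
  moreover from \<open>coeff P n = 1\<close> have "P \<noteq> 0"
    by auto
  ultimately show "finite {x. x ^ n = c}" "card {x. x ^ n = c} \<le> n"
    using card_roots_le_degree[of P n] by simp_all
qed

lemma card_power_eq_self_le:
  assumes "n > 1"
  shows "finite {x::'a::idom. x ^ n = x}" "card {x::'a::idom. x ^ n = x} \<le> n"
proof -
  define P where "P = monom (1::'a) n - monom 1 1"
  have "degree P \<le> n"
    unfolding P_def using assms by (intro degree_diff_le) (auto intro: order.trans[OF degree_monom_le])
  moreover have "coeff P n = 1"
    unfolding P_def using assms by (auto simp: coeff_monom)
  moreover have "{x. x ^ n = x} = {x. poly P x = 0}"
    by (auto simp: P_def poly_monom)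
  moreover from \<open>coeff P n = 1\<close> have "P \<noteq> 0"
    by auto
  ultimately show "finite {x::'a. x ^ n = x}" "card {x::'a. x ^ n = x} \<le> n"
    using card_roots_le_degree[of P n] by simp_all
qed

lemma eq_bound_if_sum_ge:
  fixes f :: "'b \<Rightarrow> nat"
  assumes "finite A" "\<And>x. x \<in> A \<Longrightarrow> f x \<le> c" "c * card A \<le> sum f A" "x \<in> A"
  shows "f x = c"
proof (rule ccontr)
  assume "f x \<noteq> c"
  with assms(2,4) have "f x < c" by fastforce
  have "sum f A = f x + sum f (A - {x})"
    using assms(1,4) by (simp add: sum.remove)
  also have "sum f (A - {x}) \<le> card (A - {x}) * c"
    using sum_bounded_above[of "A - {x}" f c] assms(2) by auto
  finally have "sum f A < c + card (A - {x}) * c"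
    using \<open>f x < c\<close> by linarith
  also have "c + card (A - {x}) * c = c * card A"
    using assms(1,4) by (cases "card A") (auto simp: card_gt_0_iff)
  finally show False
    using assms(3) by simp
qed

lemma sum_comp_eq_sum_card_fibres:
  assumes "finite S" "finite T" "g ` S \<subseteq> T"
  shows "(\<Sum>x\<in>S. h (g x)) = (\<Sum>t\<in>T. of_nat (card {x\<in>S. g x = t}) * (h t :: 'c::comm_semiring_1))"
  using sum.group[OF assms, of "\<lambda>x. h (g x)"] by simp

lemma power_card_UNIV_self:
  assumes "finite (UNIV :: 'a::field set)"
  shows "(x::'a) ^ card (UNIV :: 'a set) = x"
proof (cases "x = 0")
  case True
  then show ?thesis
    using assms by (simp add: finite_UNIV_card_ge_0)
next
  case False
  let ?U = "UNIV - {0::'a}"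
  have "(\<Prod>y\<in>?U. y) = (\<Prod>y\<in>?U. x * y)"
    by (rule prod.reindex_bij_witness[of _ "\<lambda>y. x * y" "\<lambda>y. y / x"]) (use False in auto)
  also have "\<dots> = x ^ card ?U * (\<Prod>y\<in>?U. y)"
    by (simp add: prod.distrib)
  finally have "x ^ card ?U * (\<Prod>y\<in>?U. y) = (\<Prod>y\<in>?U. y)"
    by (rule sym)
  moreover have "(\<Prod>y\<in>?U. y) \<noteq> 0"
    using assms by simp
  ultimately have "x ^ card ?U = 1"
    by (metis mult_cancel_right2)
  then have "x ^ Suc (card ?U) = x"
    by simp
  moreover have "card (UNIV :: 'a set) = Suc (card ?U)"
    using assms by (simp add: card_Diff_singleton finite_UNIV_card_ge_0)
  ultimately show ?thesis
    by (simp only:)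
qed

lemma power_int_power_swap: "((x::'a::division_ring) powi k) ^ n = (x ^ n) powi k"
  by (simp add: power_int_power power_int_power' mult.commute)

lemma power_int_eq_1_coprime_imp_eq_1:
  fixes u :: "'a::field"
  assumes "u \<noteq> 0" "u powi i = 1" "u powi j = 1" "gcd i j = 1"
  shows "u = 1"
proof -
  obtain s t where "s * i + t * j = 1"
    using bezout_int[of i j] assms(4) by auto
  then have "u = u powi (i * s + j * t)"
    by (simp add: mult.commute)
  also have "\<dots> = (u powi i) powi s * (u powi j) powi t"
    using assms(1) by (simp add: power_int_add power_int_mult)
  finally show ?thesis
    using assms(2,3) by simp
qed

definition unit_root :: "nat \<Rightarrow> nat \<Rightarrow> complex" where
  "unit_root n k = exp (2 * of_real pi * \<i> * of_nat k / of_nat n)"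

lemma unit_root_add: "unit_root n (k + l) = unit_root n k * unit_root n l"
  unfolding unit_root_def by (simp add: add_divide_distrib distrib_left flip: exp_add)

lemma unit_root_mult_self: "n > 0 \<Longrightarrow> unit_root n (n * d) = 1"
  unfolding unit_root_def by (simp add: exp_of_nat_mult[symmetric] mult_ac)

lemma unit_root_mod: "n > 0 \<Longrightarrow> unit_root n (k mod n) = unit_root n k"
  using unit_root_add[of n "n * (k div n)" "k mod n"] unit_root_mult_self[of n "k div n"] by simp

lemma unit_root_neq_1:
  assumes "0 < k" "k < n"
  shows "unit_root n k \<noteq> 1"
proof
  assume "unit_root n k = 1"
  then obtain j :: int where "2 * pi * real k / real n = of_int (2 * j) * pi"
    unfolding unit_root_def exp_eq_1 by auto
  then have "real k = of_int j * real n"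
    using assms pi_gt_zero by (simp add: field_simps)
  then have k_eq: "int k = j * int n"
    by (metis of_int_eq_iff of_int_mult of_int_of_nat_eq)
  show False
  proof (cases "j \<le> 0")
    case True
    then show False
      using k_eq assms(1) mult_nonpos_nonneg[of j "int n"] by simp
  next
    case False
    then have "int n \<le> j * int n"
      using mult_right_mono[of 1 j "int n"] by simp
    then show False
      using k_eq assms(2) by linarith
  qed
qed

locale quadratic_extension =
  fixes field_type :: "'a::field itself" and p m q :: nat
  assumes finite_type: "finite (UNIV :: 'a set)"
    and prime_p: "prime p" and m_pos: "m > 0" and q_def: "q = p ^ m"
    and card_UNIV: "card (UNIV :: 'a set) = q ^ 2"
begin

abbreviation subfield :: "'a set" where
  "subfield \<equiv> {z. z ^ q = z}"

abbreviation subfield_units :: "'a set" where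
  "subfield_units \<equiv> {z. z ^ q = z \<and> z \<noteq> 0}"

lemma finite_set [simp]: "finite (A :: 'a set)"
  using finite_subset[OF subset_UNIV finite_type] .

lemma CHAR_eq: "CHAR('a) = p"
proof -
  have "prime CHAR('a)"
    using finite_type finite_imp_CHAR_pos prime_CHAR_semidom by blast
  moreover have "CHAR('a) dvd p ^ (m * 2)"
    using CHAR_dvd_CARD[where 'a='a] card_UNIV q_def by (simp add: power_mult)
  ultimately show ?thesis
    using prime_p prime_dvd_power primes_dvd_imp_eq by blast
qed

lemma q_ge_2: "q \<ge> 2"
proof -
  have "p \<ge> 2"
    using prime_p prime_ge_2_nat by blast
  then show ?thesis
    using q_def m_pos power_increasing[of 1 m p] by simp
qed

lemma power_p_power_add: "(x + y :: 'a) ^ (p ^ k) = x ^ (p ^ k) + y ^ (p ^ k)"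
  using freshmans_dream'[of "p ^ k" k x y] CHAR_eq prime_p by simp

lemma power_q_add: "(x + y :: 'a) ^ q = x ^ q + y ^ q"
  using power_p_power_add q_def by simp

lemma power_q_diff: "(x - y :: 'a) ^ q = x ^ q - y ^ q"
  using power_q_add[of "x - y" y] by (simp add: algebra_simps)

lemma power_q_q: "((x::'a) ^ q) ^ q = x"
  using power_card_UNIV_self[OF finite_type, of x] card_UNIV
  by (simp add: power2_eq_square power_mult)

lemma subfield_powi: "(x::'a) ^ q = x \<Longrightarrow> (x powi k) ^ q = x powi k"
  by (simp add: power_int_power_swap)

lemma subfield_inverse: "(x::'a) ^ q = x \<Longrightarrow> (inverse x) ^ q = inverse x"
  by (simp add: power_inverse)

lemma norm_in_subfield: "((y::'a) ^ (q + 1)) ^ q = y ^ (q + 1)"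
proof -
  have "(y ^ (q + 1)) ^ q = (y ^ q) ^ q * y ^ q"
    by (simp add: power_mult_distrib flip: power_mult)
  then show ?thesis
    by (simp add: power_q_q)
qed

lemma trace_in_subfield: "((y::'a) + y ^ q) ^ q = y + y ^ q"
  by (simp only: power_q_add power_q_q add.commute)

subsection \<open>Traces and the canonical additive characters\<close>

lemma abs_trace_add: "abs_trace n (x + y :: 'a) = abs_trace n x + abs_trace n y"
  unfolding abs_trace_def CHAR_eq by (simp add: power_p_power_add sum.distrib)

lemma abs_trace_double_degree: "abs_trace (2 * m) (y::'a) = abs_trace m (y + y ^ q)"
proof -
  have split: "(\<Sum>i<m + n. y ^ p ^ i) = (\<Sum>i<m. y ^ p ^ i) + (\<Sum>i<n. (y ^ p ^ m) ^ p ^ i)" for n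
    by (induction n) (simp_all add: power_add power_mult)
  show ?thesis
    unfolding abs_trace_add unfolding mult_2 abs_trace_def CHAR_eq split q_def ..
qed

lemma abs_trace_power_p:
  assumes "(x::'a) ^ q = x"
  shows "(abs_trace m x) ^ p = abs_trace m x"
proof -
  define f where "f i = x ^ (p ^ i)" for i
  obtain k where m: "m = Suc k"
    using m_pos by (cases m) auto
  have "(abs_trace m x) ^ p = (\<Sum>i<m. f (Suc i))"
    unfolding abs_trace_def CHAR_eq f_def
    by (subst freshmans_dream_sum) (simp_all add: CHAR_eq prime_p power_mult[symmetric] mult.commute)
  also have "\<dots> = (\<Sum>i<k. f (Suc i)) + f 0"
    using assms by (simp add: m f_def q_def)
  also have "\<dots> = abs_trace m x"
    unfolding m sum.lessThan_Suc_shift abs_trace_def CHAR_eq f_def by simp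
  finally show ?thesis .
qed

lemma of_nat_inj_below_p: "k < p \<Longrightarrow> l < p \<Longrightarrow> (of_nat k :: 'a) = of_nat l \<Longrightarrow> k = l"
  using of_nat_eq_iff_cong_CHAR[of k l, where 'a='a] CHAR_eq by (simp add: cong_def)

lemma power_p_fixed_imp_of_nat:
  assumes "(y::'a) ^ p = y"
  obtains k where "k < p" "y = of_nat k"
proof -
  have "p > 1"
    using prime_p prime_gt_1_nat by blast
  have "(of_nat k :: 'a) ^ p = of_nat k" for k
  proof (induction k)
    case (Suc k)
    then show ?case
      using power_p_power_add[of "of_nat k" 1 1] by (simp add: add.commute)
  qed (use \<open>p > 1\<close> in auto)
  then have sub: "(of_nat :: nat \<Rightarrow> 'a) ` {..<p} \<subseteq> {y. y ^ p = y}"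
    by auto
  moreover have "card ((of_nat :: nat \<Rightarrow> 'a) ` {..<p}) = p"
    using of_nat_inj_below_p by (subst card_image) (auto intro: inj_onI)
  moreover have "card {y::'a. y ^ p = y} \<le> p"
    using card_power_eq_self_le(2)[OF \<open>p > 1\<close>] .
  ultimately have "(of_nat :: nat \<Rightarrow> 'a) ` {..<p} = {y. y ^ p = y}"
    using card_mono[OF finite_set sub] by (intro card_subset_eq) auto
  with assms that show ?thesis
    by blast
qed

lemma prime_field_val_of_nat: "k < p \<Longrightarrow> prime_field_val (of_nat k :: 'a) = k"
  unfolding prime_field_val_def CHAR_eq by (rule the_equality) (auto dest: of_nat_inj_below_p)

lemma can_add_char_eq_unit_root:
  assumes "(c::'a) ^ q = c"
  obtains k where "k < p" "abs_trace m c = of_nat k" "can_add_char m c = unit_root p k"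
proof -
  obtain k where "k < p" "abs_trace m c = of_nat k"
    using power_p_fixed_imp_of_nat[OF abs_trace_power_p[OF assms]] by blast
  then show ?thesis
    using that by (simp add: can_add_char_def unit_root_def CHAR_eq prime_field_val_of_nat)
qed

lemma can_add_char_add:
  assumes "(u::'a) ^ q = u" "v ^ q = v"
  shows "can_add_char m (u + v) = can_add_char m u * can_add_char m v"
proof -
  have "p > 0"
    using prime_p prime_gt_0_nat by blast
  obtain k where k: "k < p" "abs_trace m u = of_nat k" "can_add_char m u = unit_root p k"
    using can_add_char_eq_unit_root[OF assms(1)] .
  obtain l where l: "l < p" "abs_trace m v = of_nat l" "can_add_char m v = unit_root p l"
    using can_add_char_eq_unit_root[OF assms(2)] .
  have "abs_trace m (u + v) = of_nat ((k + l) mod p)"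
    using of_nat_eq_iff_cong_CHAR[of "(k + l) mod p" "k + l", where 'a='a] CHAR_eq
    by (simp add: abs_trace_add k l cong_def)
  then have "can_add_char m (u + v) = unit_root p ((k + l) mod p)"
    using \<open>p > 0\<close> by (simp add: can_add_char_def unit_root_def CHAR_eq prime_field_val_of_nat)
  then show ?thesis
    using \<open>p > 0\<close> by (simp add: unit_root_mod unit_root_add k l)
qed

lemma can_add_char_double_degree: "can_add_char (2 * m) (y::'a) = can_add_char m (y + y ^ q)"
  unfolding can_add_char_def abs_trace_double_degree ..

lemma can_add_char_double_degree_add:
  assumes "(w::'a) ^ q = w"
  shows "can_add_char (2 * m) (a * w + d) = can_add_char m ((a ^ q + a) * w) * can_add_char (2 * m) d"
proof -
  have "(a * w + d) + (a * w + d) ^ q = (a ^ q + a) * w + (d + d ^ q)"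
    using assms by (simp add: power_q_add power_mult_distrib algebra_simps)
  moreover have "((a ^ q + a) * w) ^ q = (a ^ q + a) * w"
    using assms by (simp add: power_q_add power_q_q power_mult_distrib)
  ultimately show ?thesis
    unfolding can_add_char_double_degree by (simp only: can_add_char_add trace_in_subfield)
qed

subsection \<open>Sizes of the subfield and of the norm fibres\<close>

text \<open>The nonzero elements fall into at most q - 1 norm fibres over F_q^*, each of size at most
  q + 1; as q^2 - 1 = (q - 1)(q + 1), all these bounds are attained.\<close>
lemma card_subfield_and_norm_fibres:
  "card subfield = q \<and> (\<forall>s\<in>subfield_units. card {y::'a. y ^ (q + 1) = s} = q + 1)"
proof -
  define fibre where "fibre s = {y::'a. y ^ (q + 1) = s}" for s
  have "UNIV - {0} = (\<Union>s\<in>subfield_units. fibre s)"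
    using norm_in_subfield by (auto simp: fibre_def)
  then have "card (UNIV - {0::'a}) = (\<Sum>s\<in>subfield_units. card (fibre s))"
    by (simp add: card_UN_disjoint fibre_def disjoint_iff)
  then have sum_eq: "(\<Sum>s\<in>subfield_units. card (fibre s)) = (q - 1) * (q + 1)"
    using card_UNIV q_ge_2 by (simp add: card_Diff_singleton power2_eq_square algebra_simps)
  have fibre_le: "card (fibre s) \<le> q + 1" for s
    unfolding fibre_def by (rule card_power_eq_le) simp
  have subfield_le: "card subfield \<le> q"
    using card_power_eq_self_le(2)[of q] q_ge_2 by simp
  have "(0::'a) \<in> subfield"
    using q_ge_2 by simp
  moreover have "subfield_units = subfield - {0}"
    by auto
  ultimately have card_units: "card subfield_units = card subfield - 1"
    by (simp add: card_Diff_singleton)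
  have "(q - 1) * (q + 1) \<le> card subfield_units * (q + 1)"
    using sum_eq sum_bounded_above[of subfield_units "\<lambda>s. card (fibre s)" "q + 1"] fibre_le by simp
  then have "q - 1 \<le> card subfield_units"
    by (rule mult_right_le_imp_le) simp
  then have "card subfield_units = q - 1"
    using card_units subfield_le by linarith
  moreover have "card (fibre s) = q + 1" if "s \<in> subfield_units" for s
    by (rule eq_bound_if_sum_ge[of subfield_units "\<lambda>s. card (fibre s)"])
      (use fibre_le sum_eq that \<open>card subfield_units = q - 1\<close> in \<open>auto simp: mult.commute\<close>)
  ultimately show ?thesis
    using card_units q_ge_2 \<open>(0::'a) \<in> subfield\<close> card_gt_0_iff[of subfield]
    by (auto simp: fibre_def)
qed

lemma card_subfield: "card subfield = q"
  using card_subfield_and_norm_fibres by blast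

lemma card_subfield_units: "card subfield_units = q - 1"
proof -
  have "subfield_units = subfield - {0}"
    by auto
  then show ?thesis
    using card_subfield q_ge_2 by (simp add: card_Diff_singleton)
qed

lemma card_norm_fibre: "(s::'a) ^ q = s \<Longrightarrow> s \<noteq> 0 \<Longrightarrow> card {y. y ^ (q + 1) = s} = q + 1"
  using card_subfield_and_norm_fibres by blast

lemma exists_abs_trace_neq_0: "\<exists>t::'a. t ^ q = t \<and> abs_trace m t \<noteq> 0"
proof (rule ccontr)
  assume "\<not> ?thesis"
  then have zeros: "subfield \<subseteq> {x. abs_trace m x = 0}"
    by auto
  have "p > 1"
    using prime_p prime_gt_1_nat by blast
  define T where "T = (\<Sum>i<m. monom (1::'a) (p ^ i))"
  have "poly T x = abs_trace m x" for x
    unfolding T_def abs_trace_def CHAR_eq by (simp add: poly_sum poly_monom)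
  then have roots: "{x. abs_trace m x = 0} = {x. poly T x = 0}"
    by simp
  have "coeff T (p ^ (m - 1)) = (\<Sum>i<m. if i = m - 1 then 1 else 0)"
    unfolding T_def coeff_sum using \<open>p > 1\<close>
    by (intro sum.cong refl) (auto simp: coeff_monom power_inject_exp)
  then have "T \<noteq> 0"
    using m_pos by auto
  moreover have "degree T \<le> p ^ (m - 1)"
    unfolding T_def using \<open>p > 1\<close>
    by (intro degree_sum_le) (auto intro!: order.trans[OF degree_monom_le] power_increasing)
  ultimately have "card {x. poly T x = 0} \<le> p ^ (m - 1)"
    by (rule card_roots_le_degree(2))
  then have "q \<le> p ^ (m - 1)"
    using card_mono[OF finite_set zeros] card_subfield roots by simp
  moreover have "p ^ (m - 1) < p ^ m"
    using \<open>p > 1\<close> m_pos by (intro power_strict_increasing) auto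
  ultimately show False
    using q_def by simp
qed

lemma sum_can_add_char_subfield: "(\<Sum>t\<in>subfield. can_add_char m t) = 0"
proof -
  obtain t0 :: 'a where t0: "t0 ^ q = t0" "abs_trace m t0 \<noteq> 0"
    using exists_abs_trace_neq_0 by blast
  define S where "S = (\<Sum>t\<in>subfield. can_add_char m t)"
  have "S = (\<Sum>t\<in>subfield. can_add_char m (t0 + t))"
    unfolding S_def
    by (rule sum.reindex_bij_witness[of _ "\<lambda>t. t0 + t" "\<lambda>t. t - t0"])
       (auto simp: power_q_add power_q_diff t0)
  also have "\<dots> = can_add_char m t0 * S"
    unfolding S_def sum_distrib_left by (intro sum.cong refl) (simp add: can_add_char_add t0)
  finally have "(can_add_char m t0 - 1) * S = 0"
    by (simp add: algebra_simps)
  moreover have "can_add_char m t0 \<noteq> 1"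
  proof -
    obtain k where "k < p" "abs_trace m t0 = of_nat k" "can_add_char m t0 = unit_root p k"
      using can_add_char_eq_unit_root[OF t0(1)] .
    then show ?thesis
      using t0(2) unit_root_neq_1[of k p] by (cases k) auto
  qed
  ultimately show ?thesis
    by (simp add: S_def)
qed

subsection \<open>Character sums over norm fibres\<close>

lemma card_norm_trace_plus_card_kloosterman_le_2:
  fixes s u :: 'a
  assumes "s \<noteq> 0"
  shows "card {y. y ^ (q + 1) = s \<and> y + y ^ q = u} + card {z\<in>subfield_units. z + inverse z * s = u} \<le> 2"
proof -
  define N where "N = {y. y ^ (q + 1) = s \<and> y + y ^ q = u}"
  define K where "K = {z\<in>subfield_units. z + inverse z * s = u}"
  define R where "R = {r::'a. r * r - u * r + s = 0}"
  have "card R \<le> 2"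
  proof -
    have "R = {x. poly [:s, -u, 1:] x = 0}"
      by (auto simp: R_def algebra_simps)
    then show ?thesis
      using card_roots_le_degree(2)[of "[:s, -u, 1:]" 2] by simp
  qed
  have "N \<subseteq> R"
    by (auto simp: N_def R_def algebra_simps)
  have "K \<subseteq> R"
    by (auto simp: K_def R_def field_simps)
  have card_NK: "card N + card K = card (N \<union> K) + card (N \<inter> K)"
    by (rule card_Un_Int) simp_all
  show ?thesis
  proof (cases "N \<inter> K = {}")
    case True
    then show ?thesis
      using card_NK \<open>N \<subseteq> R\<close> \<open>K \<subseteq> R\<close> \<open>card R \<le> 2\<close> card_mono[of R "N \<union> K"]
      unfolding N_def K_def by simp
  next
    case False
    then obtain y where "y \<in> N" "y \<in> K"
      by blast
    then have "s = y * y" "u = y + y"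
      by (auto simp: N_def K_def)
    have "r = y" if "r \<in> R" for r
    proof -
      have "(r - y) * (r - y) = 0"
        using that unfolding R_def \<open>s = y * y\<close> \<open>u = y + y\<close> by (simp add: algebra_simps)
      then show ?thesis
        by simp
    qed
    then have "R \<subseteq> {y}"
      by auto
    then have "N \<union> K \<subseteq> {y}" "N \<inter> K \<subseteq> {y}"
      using \<open>N \<subseteq> R\<close> \<open>K \<subseteq> R\<close> by auto
    then have "card (N \<union> K) \<le> 1" "card (N \<inter> K) \<le> 1"
      using card_mono[of "{y}" "N \<union> K"] card_mono[of "{y}" "N \<inter> K"] by simp_all
    then show ?thesis
      using card_NK unfolding N_def K_def by simp
  qed
qed

lemma sum_can_add_char_norm_fibre:
  assumes "(s::'a) ^ q = s" "s \<noteq> 0"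
  shows "(\<Sum>y\<in>{y. y ^ (q + 1) = s}. can_add_char (2 * m) y)
       = - (\<Sum>z\<in>subfield_units. can_add_char m (z + inverse z * s))"
proof -
  define Fib where "Fib = {y::'a. y ^ (q + 1) = s}"
  define N where "N u = {y\<in>Fib. y + y ^ q = u}" for u
  define K where "K u = {z\<in>subfield_units. z + inverse z * s = u}" for u
  have trace_img: "(\<lambda>y. y + y ^ q) ` Fib \<subseteq> subfield"
    using trace_in_subfield by auto
  have kloosterman_img: "(\<lambda>z. z + inverse z * s) ` subfield_units \<subseteq> subfield"
    using assms by (auto simp: power_q_add power_mult_distrib subfield_inverse)
  note group_trace = sum_comp_eq_sum_card_fibres[OF finite_set finite_set trace_img]
  note group_kloosterman = sum_comp_eq_sum_card_fibres[OF finite_set finite_set kloosterman_img]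
  have "(\<Sum>u\<in>subfield. card (N u) + card (K u)) = card Fib + card subfield_units"
    using group_trace[of "\<lambda>_. 1::nat"] group_kloosterman[of "\<lambda>_. 1::nat"]
    by (simp add: sum.distrib N_def K_def)
  also have "\<dots> = 2 * card subfield"
    using card_norm_fibre[OF assms] card_subfield_units card_subfield q_ge_2 by (simp add: Fib_def)
  finally have "2 * card subfield \<le> (\<Sum>u\<in>subfield. card (N u) + card (K u))"
    by simp
  moreover have "card (N u) + card (K u) \<le> 2" for u
    using card_norm_trace_plus_card_kloosterman_le_2[OF assms(2), of u]
    by (simp add: N_def K_def Fib_def conj_commute)
  ultimately have two: "card (N u) + card (K u) = 2" if "u \<in> subfield" for u
    using eq_bound_if_sum_ge[of subfield "\<lambda>u. card (N u) + card (K u)"] that by auto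
  have "(\<Sum>y\<in>Fib. can_add_char (2 * m) y) + (\<Sum>z\<in>subfield_units. can_add_char m (z + inverse z * s))
      = (\<Sum>u\<in>subfield. of_nat (card (N u) + card (K u)) * can_add_char m u)"
    unfolding can_add_char_double_degree group_trace group_kloosterman N_def K_def
    by (simp add: sum.distrib algebra_simps)
  also have "\<dots> = 2 * (\<Sum>u\<in>subfield. can_add_char m u)"
    by (simp add: two sum_distrib_left)
  finally show ?thesis
    by (simp add: sum_can_add_char_subfield Fib_def eq_neg_iff_add_eq_0)
qed

lemma card_Sigma_norm_fibres:
  assumes "(c::'a) ^ q = c" "c \<noteq> 0"
  shows "card (SIGMA t:subfield_units. {y. y ^ (q + 1) = c * t powi e}) = card {x::'a. x \<noteq> 0}"
proof -
  have "card {y. y ^ (q + 1) = c * t powi e} = q + 1" if "t \<in> subfield_units" for t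
  proof (rule card_norm_fibre)
    show "(c * t powi e) ^ q = c * t powi e"
      using that assms(1) by (simp add: power_mult_distrib subfield_powi)
    show "c * t powi e \<noteq> 0"
      using that assms(2) by simp
  qed
  then have "card (SIGMA t:subfield_units. {y. y ^ (q + 1) = c * t powi e}) = (\<Sum>t\<in>subfield_units. q + 1)"
    by (simp add: card_SigmaI del: power_Suc power_Suc2)
  also have "\<dots> = q ^ 2 - 1"
    using q_ge_2 by (simp add: card_subfield_units power2_eq_square algebra_simps)
  also have "\<dots> = card {x::'a. x \<noteq> 0}"
    using card_UNIV by (simp add: Collect_neg_eq Compl_eq_Diff_UNIV card_Diff_singleton)
  finally show ?thesis .
qed

lemma bij_betw_norm_monomial:
  fixes b :: 'a and e :: int
  assumes "b \<noteq> 0" "gcd (int q + 1) e = 1"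
  shows "bij_betw (\<lambda>x. (x ^ (q + 1), b * x powi e)) {x. x \<noteq> 0}
           (SIGMA t:subfield_units. {y. y ^ (q + 1) = b ^ (q + 1) * t powi e})"
    (is "bij_betw ?\<Phi> ?X ?T")
proof -
  have "inj_on ?\<Phi> ?X"
  proof (rule inj_onI)
    fix x x' :: 'a
    assume "x \<in> ?X" "x' \<in> ?X" "?\<Phi> x = ?\<Phi> x'"
    define u where "u = x / x'"
    have "u ^ (q + 1) = 1" "u powi e = 1" "u \<noteq> 0"
      using \<open>x \<in> ?X\<close> \<open>x' \<in> ?X\<close> \<open>?\<Phi> x = ?\<Phi> x'\<close> assms(1)
      by (simp_all add: u_def power_divide power_int_divide_distrib)
    moreover have "u powi (int q + 1) = 1"
      using \<open>u ^ (q + 1) = 1\<close> power_int_of_nat[of u "q + 1"] by (simp add: add.commute)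
    ultimately have "u = 1"
      using power_int_eq_1_coprime_imp_eq_1[OF _ _ _ assms(2)] by blast
    then show "x = x'"
      using \<open>x' \<in> ?X\<close> by (simp add: u_def)
  qed
  moreover have "?\<Phi> ` ?X \<subseteq> ?T"
  proof
    fix x assume "x \<in> ?\<Phi> ` ?X"
    then obtain y where "y \<noteq> 0" "x = ?\<Phi> y"
      by auto
    moreover have "(b * y powi e) ^ (q + 1) = b ^ (q + 1) * (y ^ (q + 1)) powi e"
      by (simp only: power_mult_distrib power_int_power_swap)
    ultimately show "x \<in> ?T"
      using norm_in_subfield[of y] by simp
  qed
  moreover have "card ?T = card ?X"
    using assms(1) norm_in_subfield[of b] by (intro card_Sigma_norm_fibres) simp_all
  ultimately have "?\<Phi> ` ?X = ?T"
    by (intro card_subset_eq) (simp_all add: card_image)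
  with \<open>inj_on ?\<Phi> ?X\<close> show ?thesis
    by (simp add: bij_betw_def)
qed

lemma sum_can_add_char_by_norm_fibres:
  fixes a b :: 'a and e1 e2 :: int
  assumes "b \<noteq> 0" "gcd (int q + 1) e2 = 1"
  shows "(\<Sum>x\<in>{x. x \<noteq> 0}. can_add_char (2 * m) (a * x powi ((int q + 1) * e1) + b * x powi e2))
       = (\<Sum>t\<in>subfield_units. can_add_char m ((a ^ q + a) * t powi e1) *
            (\<Sum>y\<in>{y. y ^ (q + 1) = b ^ (q + 1) * t powi e2}. can_add_char (2 * m) y))"
proof -
  have "can_add_char (2 * m) (a * x powi ((int q + 1) * e1) + b * x powi e2)
      = can_add_char m ((a ^ q + a) * (x ^ (q + 1)) powi e1) * can_add_char (2 * m) (b * x powi e2)"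
    for x :: 'a
  proof -
    have "x powi ((int q + 1) * e1) = (x ^ (q + 1)) powi e1"
      unfolding power_int_power by (simp add: add.commute)
    then show ?thesis
      by (simp only: can_add_char_double_degree_add[OF subfield_powi[OF norm_in_subfield]])
  qed
  then show ?thesis
    using sum.reindex_bij_betw[OF bij_betw_norm_monomial[OF assms],
        of "\<lambda>(t, y). can_add_char m ((a ^ q + a) * t powi e1) * can_add_char (2 * m) y"]
    by (simp add: sum.Sigma[symmetric] sum_distrib_left)
qed

lemma twisted_sum_can_add_char_norm_fibre:
  assumes "(s::'a) ^ q = s" "s \<noteq> 0" "w ^ q = w"
  shows "can_add_char m w * (\<Sum>y\<in>{y. y ^ (q + 1) = s}. can_add_char (2 * m) y)
       = - (\<Sum>z\<in>subfield_units. can_add_char m (z + w + inverse z * s))"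
proof -
  have merge: "can_add_char m w * can_add_char m (z + inverse z * s) = can_add_char m (z + w + inverse z * s)"
    if "z \<in> subfield_units" for z
  proof -
    have "(z + inverse z * s) ^ q = z + inverse z * s"
      using that assms(1) by (simp add: power_q_add power_mult_distrib subfield_inverse)
    then have "can_add_char m w * can_add_char m (z + inverse z * s) = can_add_char m (w + (z + inverse z * s))"
      using assms(3) by (simp add: can_add_char_add)
    then show ?thesis
      by (simp add: algebra_simps)
  qed
  show ?thesis
    unfolding sum_can_add_char_norm_fibre[OF assms(1,2)] sum_distrib_left mult_minus_right
    by (intro arg_cong[where f = uminus] sum.cong refl) (rule merge)
qed

end

theorem lemma2:
  fixes a b :: "'a::field" and e1 e2 :: int and p m q :: nat
  assumes "finite (UNIV :: 'a set)"
    and "prime p" and "m > 0" and "q = p ^ m"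
    and "card (UNIV :: 'a set) = q ^ 2"
    and "a ^ q + a \<noteq> 0" and "b \<noteq> 0"
    and "gcd (int q + 1) e2 = 1"
  shows "(\<Sum>x\<in>{x::'a. x \<noteq> 0}.
            can_add_char (2 * m) (a * x powi ((int q + 1) * e1) + b * x powi e2))
       = - (\<Sum>z\<in>{z::'a. z ^ q = z \<and> z \<noteq> 0}. \<Sum>x\<in>{x::'a. x ^ q = x \<and> x \<noteq> 0}.
              can_add_char m (z + (a ^ q + a) * x powi e1 + inverse z * b ^ (q + 1) * x powi e2))"
proof -
  interpret quadratic_extension "TYPE('a)" p m q
    by unfold_locales (use assms in auto)
  define B where "B = b ^ (q + 1)"
  have "(\<Sum>x\<in>{x. x \<noteq> 0}. can_add_char (2 * m) (a * x powi ((int q + 1) * e1) + b * x powi e2))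
      = (\<Sum>t\<in>subfield_units. can_add_char m ((a ^ q + a) * t powi e1) *
           (\<Sum>y\<in>{y. y ^ (q + 1) = B * t powi e2}. can_add_char (2 * m) y))"
    unfolding B_def using assms(7,8) by (rule sum_can_add_char_by_norm_fibres)
  also have "\<dots> = (\<Sum>t\<in>subfield_units. - (\<Sum>z\<in>subfield_units.
                    can_add_char m (z + (a ^ q + a) * t powi e1 + inverse z * (B * t powi e2))))"
  proof (intro sum.cong refl twisted_sum_can_add_char_norm_fibre)
    fix t assume "t \<in> subfield_units"
    then show "(B * t powi e2) ^ q = B * t powi e2" "B * t powi e2 \<noteq> 0"
        "((a ^ q + a) * t powi e1) ^ q = (a ^ q + a) * t powi e1"
      using assms(7) norm_in_subfield[of b]
      by (simp_all add: B_def power_q_add power_q_q power_mult_distrib subfield_powi)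
  qed
  also have "\<dots> = - (\<Sum>z\<in>subfield_units. \<Sum>t\<in>subfield_units.
                    can_add_char m (z + (a ^ q + a) * t powi e1 + inverse z * B * t powi e2))"
    unfolding sum_negf by (subst sum.swap) (simp add: mult.assoc)
  finally show ?thesis
    by (simp only: B_def)
qed

end
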